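(* Let $\mathbb{C}$ be a locally small category and $\mathbb{C}_{\mathit{fin}}$ a full subcategory satisfying (C1)–(C5) below. Let $U:\mathbb{C}^*\to\mathbb{C}$ be a reasonable expansion with unique restrictions. Let $F$ be a locally finite homogeneous object in $\mathbb{C}$ and assume that $U^{-1}(F)$ is compact with respect to the topology $\sigma_F$. Let $G=\mathrm{Aut}(F)$ and let $\mathcal{F}\in U^{-1}(F)$ be arbitrary. Then $U$ restricted to (the full subcategory spanned by) $\mathrm{Age}(\mathcal{F})$, as a functor into (the full subcategory spanned by) $\mathrm{Age}(F)$, has the expansion property if and only if $\mathrm{Age}(\mathcal{F})\subseteq\mathrm{Age}(\mathcal{F}')$ for all $\mathcal{F}'\in\overline{\mathcal{F}^G}$.
   Context: Write $A\to B$ if $\hom(A,B)\ne\varnothing$. Conditions: (C1) all morphisms of $\mathbb{C}$ are monomorphisms; (C2) $\mathrm{Ob}(\mathbb{C}_{\mathit{fin}})$ is a set; (C3) $\hom(A,B)$ is finite for $A,B\in\mathrm{Ob}(\mathbb{C}_{\mathit{fin}})$; (C4) for every $F\in\mathrm{Ob}(\mathbb{C})$ there is $A\in\mathrm{Ob}(\mathbb{C}_{\mathit{fin}})$ with $A\to F$; (C5) for every $B\in\mathrm{Ob}(\mathbb{C}_{\mathit{fin}})$ the set $\{A\in\mathrm{Ob}(\mathbb{C}_{\mathit{fin}}):A\to B\}$ is finite. $\mathrm{Age}(F)=\{A\in\mathrm{Ob}(\mathbb{C}_{\mathit{fin}}):A\to F\}$. $F$ is homogeneous if for all $A\in\mathrm{Ob}(\mathbb{C}_{\mathit{fin}})$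 and $e_1,e_2\in\hom(A,F)$ there is $g\in\mathrm{Aut}(F)$ with $g\cdot e_1=e_2$. $F$ is locally finite if for all $A,B\in\mathrm{Ob}(\mathbb{C}_{\mathit{fin}})$, $e\in\hom(A,F)$, $f\in\hom(B,F)$ there exist $D\in\mathrm{Ob}(\mathbb{C}_{\mathit{fin}})$, $r\in\hom(D,F)$, $p\in\hom(A,D)$, $q\in\hom(B,D)$ with $r\cdot p=e$, $r\cdot q=f$, such that for every $H\in\mathrm{Ob}(\mathbb{C})$, $r'\in\hom(H,F)$, $p'\in\hom(A,H)$, $q'\in\hom(B,H)$ with $r'\cdot p'=e$, $r'\cdot q'=f$ there is $s\in\hom(D,H)$ with $r'\cdot s=r$, $s\cdot p=p'$, $s\cdot q=q'$. An expansion of $\mathbb{C}$ is a locally small category $\mathbb{C}^*$ with a functor $U:\mathbb{C}^*\to\mathbb{C}$ surjective on objects and injective on hom-sets; we regard $\hom_{\mathbb{C}^*}(\mathcal{A},\mathcal{B})\subseteq\hom_{\mathbb{C}}(U\mathcal{A},U\mathcal{B})$, and $U^{-1}(A)=\{\mathcal{A}:U(\mathcal{A})=A\}$. $U$ is reasonable if for every $e\in\hom(A,B)$ and $\mathcal{A}\in U^{-1}(A)$ there is $\mathcal{B}\in U^{-1}(B)$ with $e\in\hom(\mathcal{A},\mathcal{B})$; it has unique restrictions if for every $\mathcal{B}$ and $e\in\hom(A,U(\mathcal{B}))$ there is exactly one $\mathcal{A}\in U^{-1}(A)$ with $e\in\hom(\mathcal{A},\mathcal{B})$. $\mathbb{C}^*_{\mathit{fin}}$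 is the full subcategory of $\mathbb{C}^*$ on $\bigcup\{U^{-1}(A):A\in\mathrm{Ob}(\mathbb{C}_{\mathit{fin}})\}$, and $\mathrm{Age}(\mathcal{F})=\{\mathcal{A}\in\mathrm{Ob}(\mathbb{C}^*_{\mathit{fin}}):\mathcal{A}\to\mathcal{F}\}$. The restricted functor has the expansion property if for every $A\in\mathrm{Age}(F)$ there is $B\in\mathrm{Age}(F)$ such that $\mathcal{A}\to\mathcal{B}$ for all $\mathcal{A},\mathcal{B}\in\mathrm{Age}(\mathcal{F})$ with $U(\mathcal{A})=A$, $U(\mathcal{B})=B$. For $g\in G$, $\mathcal{F}^g$ is the unique $\mathcal{F}'\in U^{-1}(F)$ with $g^{-1}\in\hom(\mathcal{F},\mathcal{F}')$, and $\mathcal{F}^G=\{\mathcal{F}^g:g\in G\}$. $\sigma_F$ is the topology on $U^{-1}(F)$ generated by the sets $N(e,\mathcal{A})=\{\mathcal{F}\in U^{-1}(F):e\in\hom(\mathcal{A},\mathcal{F})\}$, $\mathcal{A}\in\mathrm{Ob}(\mathbb{C}^*_{\mathit{fin}})$, $e\in\hom(U(\mathcal{A}),F)$; $\overline{\mathcal{F}^G}$ is the closure in $\sigma_F$. *)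

theory Defs
  imports "HOL-Analysis.Analysis"
begin

text \<open>A (locally small) category presented by its hom-sets: objects of type 'o,
  morphisms of type 'm; comp g f is g after f.\<close>

record ('o,'m) cat =
  Ob :: "'o set"
  Hom :: "'o \<Rightarrow> 'o \<Rightarrow> 'm set"
  comp :: "'m \<Rightarrow> 'm \<Rightarrow> 'm"
  idm :: "'o \<Rightarrow> 'm"

definition is_cat :: "('o,'m) cat \<Rightarrow> bool" where
  "is_cat C \<longleftrightarrow>
     (\<forall>A B. (A \<notin> Ob C \<or> B \<notin> Ob C) \<longrightarrow> Hom C A B = {}) \<and>
     (\<forall>A\<in>Ob C. idm C A \<in> Hom C A A) \<and>
     (\<forall>A B D f g. f \<in> Hom C A B \<longrightarrow> g \<in> Hom C B D \<longrightarrow> comp C g f \<in> Hom C A D) \<and>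
     (\<forall>A B D E f g h. f \<in> Hom C A B \<longrightarrow> g \<in> Hom C B D \<longrightarrow> h \<in> Hom C D E \<longrightarrow>
        comp C h (comp C g f) = comp C (comp C h g) f) \<and>
     (\<forall>A B f. f \<in> Hom C A B \<longrightarrow> comp C (idm C B) f = f \<and> comp C f (idm C A) = f)"

definition arr :: "('o,'m) cat \<Rightarrow> 'o \<Rightarrow> 'o \<Rightarrow> bool" where
  "arr C A B \<longleftrightarrow> Hom C A B \<noteq> {}"

definition all_mono :: "('o,'m) cat \<Rightarrow> bool" where
  "all_mono C \<longleftrightarrow> (\<forall>A B X f g h. f \<in> Hom C A B \<longrightarrow> g \<in> Hom C X A \<longrightarrow> h \<in> Hom C X A \<longrightarrow>
      comp C f g = comp C f h \<longrightarrow> g = h)"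

text \<open>Conditions (C1)--(C5) for the full subcategory of C on the object set Obf.
  (C2) is automatic in HOL (every collection of objects is a set).\<close>
definition fin_conditions :: "('o,'m) cat \<Rightarrow> 'o set \<Rightarrow> bool" where
  "fin_conditions C Obf \<longleftrightarrow>
     Obf \<subseteq> Ob C \<and>
     all_mono C \<and>
     (\<forall>A\<in>Obf. \<forall>B\<in>Obf. finite (Hom C A B)) \<and>
     (\<forall>F\<in>Ob C. \<exists>A\<in>Obf. arr C A F) \<and>
     (\<forall>B\<in>Obf. finite {A\<in>Obf. arr C A B})"

definition Age :: "('o,'m) cat \<Rightarrow> 'o set \<Rightarrow> 'o \<Rightarrow> 'o set" where
  "Age C Obf F = {A\<in>Obf. arr C A F}"

definition Aut :: "('o,'m) cat \<Rightarrow> 'o \<Rightarrow> 'm set" where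
  "Aut C F = {g\<in>Hom C F F. \<exists>h\<in>Hom C F F. comp C h g = idm C F \<and> comp C g h = idm C F}"

definition aut_inv :: "('o,'m) cat \<Rightarrow> 'o \<Rightarrow> 'm \<Rightarrow> 'm" where
  "aut_inv C F g = (THE h. h \<in> Hom C F F \<and> comp C h g = idm C F \<and> comp C g h = idm C F)"

definition homogeneous :: "('o,'m) cat \<Rightarrow> 'o set \<Rightarrow> 'o \<Rightarrow> bool" where
  "homogeneous C Obf F \<longleftrightarrow>
     (\<forall>A\<in>Obf. \<forall>e1\<in>Hom C A F. \<forall>e2\<in>Hom C A F. \<exists>g\<in>Aut C F. comp C g e1 = e2)"

definition locally_finite :: "('o,'m) cat \<Rightarrow> 'o set \<Rightarrow> 'o \<Rightarrow> bool" where
  "locally_finite C Obf F \<longleftrightarrow>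
     (\<forall>A\<in>Obf. \<forall>B\<in>Obf. \<forall>e\<in>Hom C A F. \<forall>f\<in>Hom C B F.
        (\<exists>D\<in>Obf. \<exists>r\<in>Hom C D F. \<exists>p\<in>Hom C A D. \<exists>q\<in>Hom C B D.
           comp C r p = e \<and> comp C r q = f \<and>
           (\<forall>H\<in>Ob C. \<forall>r'\<in>Hom C H F. \<forall>p'\<in>Hom C A H. \<forall>q'\<in>Hom C B H.
              comp C r' p' = e \<and> comp C r' q' = f \<longrightarrow>
              (\<exists>s\<in>Hom C D H. comp C r' s = r \<and> comp C s p = p' \<and> comp C s q = q'))))"

text \<open>An expansion U : Cs \<rightarrow> C: a functor surjective on objects with
  Hom Cs a b \<subseteq> Hom C (U a) (U b) (hence injective on hom-sets), composition and
  identities inherited from C.\<close>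
definition expansion :: "('x,'m) cat \<Rightarrow> ('x \<Rightarrow> 'o) \<Rightarrow> ('o,'m) cat \<Rightarrow> bool" where
  "expansion Cs U C \<longleftrightarrow>
     is_cat Cs \<and>
     U ` Ob Cs = Ob C \<and>
     (\<forall>a b. Hom Cs a b \<subseteq> Hom C (U a) (U b)) \<and>
     (\<forall>a b c f g. f \<in> Hom Cs a b \<longrightarrow> g \<in> Hom Cs b c \<longrightarrow> comp Cs g f = comp C g f) \<and>
     (\<forall>a\<in>Ob Cs. idm Cs a = idm C (U a))"

definition Uinv :: "('x,'m) cat \<Rightarrow> ('x \<Rightarrow> 'o) \<Rightarrow> 'o \<Rightarrow> 'x set" where
  "Uinv Cs U A = {a\<in>Ob Cs. U a = A}"

definition reasonable :: "('x,'m) cat \<Rightarrow> ('x \<Rightarrow> 'o) \<Rightarrow> ('o,'m) cat \<Rightarrow> bool" where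
  "reasonable Cs U C \<longleftrightarrow>
     (\<forall>A B e a. e \<in> Hom C A B \<longrightarrow> a \<in> Uinv Cs U A \<longrightarrow>
        (\<exists>b\<in>Uinv Cs U B. e \<in> Hom Cs a b))"

definition unique_restrictions :: "('x,'m) cat \<Rightarrow> ('x \<Rightarrow> 'o) \<Rightarrow> ('o,'m) cat \<Rightarrow> bool" where
  "unique_restrictions Cs U C \<longleftrightarrow>
     (\<forall>b\<in>Ob Cs. \<forall>A. \<forall>e\<in>Hom C A (U b). \<exists>!a. a \<in> Uinv Cs U A \<and> e \<in> Hom Cs a b)"

definition Ob_fin_exp :: "('x,'m) cat \<Rightarrow> ('x \<Rightarrow> 'o) \<Rightarrow> 'o set \<Rightarrow> 'x set" where
  "Ob_fin_exp Cs U Obf = {a\<in>Ob Cs. U a \<in> Obf}"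

definition Age_exp :: "('x,'m) cat \<Rightarrow> ('x \<Rightarrow> 'o) \<Rightarrow> 'o set \<Rightarrow> 'x \<Rightarrow> 'x set" where
  "Age_exp Cs U Obf Fs = {a\<in>Ob_fin_exp Cs U Obf. arr Cs a Fs}"

definition expansion_property ::
  "('x,'m) cat \<Rightarrow> ('x \<Rightarrow> 'o) \<Rightarrow> ('o,'m) cat \<Rightarrow> 'o set \<Rightarrow> 'x \<Rightarrow> bool" where
  "expansion_property Cs U C Obf Fs \<longleftrightarrow>
     (\<forall>A\<in>Age C Obf (U Fs). \<exists>B\<in>Age C Obf (U Fs).
        \<forall>a\<in>Age_exp Cs U Obf Fs. \<forall>b\<in>Age_exp Cs U Obf Fs.
          U a = A \<longrightarrow> U b = B \<longrightarrow> arr Cs a b)"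

definition exp_act :: "('x,'m) cat \<Rightarrow> ('x \<Rightarrow> 'o) \<Rightarrow> ('o,'m) cat \<Rightarrow> 'x \<Rightarrow> 'm \<Rightarrow> 'x" where
  "exp_act Cs U C Fs g =
     (THE Fs'. Fs' \<in> Uinv Cs U (U Fs) \<and> aut_inv C (U Fs) g \<in> Hom Cs Fs Fs')"

definition orbit_exp :: "('x,'m) cat \<Rightarrow> ('x \<Rightarrow> 'o) \<Rightarrow> ('o,'m) cat \<Rightarrow> 'x \<Rightarrow> 'x set" where
  "orbit_exp Cs U C Fs = (\<lambda>g. exp_act Cs U C Fs g) ` Aut C (U Fs)"

definition Nbhd :: "('x,'m) cat \<Rightarrow> ('x \<Rightarrow> 'o) \<Rightarrow> 'o \<Rightarrow> 'm \<Rightarrow> 'x \<Rightarrow> 'x set" where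
  "Nbhd Cs U F e a = {Fs\<in>Uinv Cs U F. e \<in> Hom Cs a Fs}"

definition sigma_top ::
  "('x,'m) cat \<Rightarrow> ('x \<Rightarrow> 'o) \<Rightarrow> ('o,'m) cat \<Rightarrow> 'o set \<Rightarrow> 'o \<Rightarrow> 'x topology" where
  "sigma_top Cs U C Obf F = topology_generated_by
     (insert (Uinv Cs U F)
        {Nbhd Cs U F e a | e a. a \<in> Ob_fin_exp Cs U Obf \<and> e \<in> Hom C (U a) F})"

end

theory Submission
  imports Defs
begin

text \<open>
  Since restrictions are unique, for fixed \<open>e : A \<rightarrow> F\<close> the basic open sets \<open>N(e,\<A>)\<close>,
  \<open>\<A> \<in> U\<^sup>-\<^sup>1(A)\<close>, partition \<open>U\<^sup>-\<^sup>1(F)\<close>, so compactness makes \<open>U\<^sup>-\<^sup>1(A)\<close> finite.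

  If \<open>Age(\<F>) \<subseteq> Age(\<F>')\<close> on the closure of \<open>\<F>\<^sup>G\<close>, then for each of the finitely many
  expansions \<open>\<A>\<close> of \<open>A\<close> in \<open>Age(\<F>)\<close> the sets \<open>N(e,\<A>)\<close> cover this compact closure, so
  finitely many \<open>e : A \<rightarrow> F\<close> suffice; local finiteness makes all of them factor through a
  single \<open>f : B \<rightarrow> F\<close>. For \<open>\<B> \<in> Age(\<F>)\<close> over \<open>B\<close>, homogeneity turns \<open>f\<close> into an
  embedding of \<open>\<B>\<close> into some \<open>\<F>\<^sup>g\<close>; as \<open>\<A>\<close> embeds into \<open>\<F>\<^sup>g\<close> along some
  \<open>e = f p\<close>, unique restrictions give \<open>p : \<A> \<rightarrow> \<B>\<close>. So \<open>B\<close> witnesses the expansion property.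

  Conversely, if \<open>\<B>\<close> embeds into \<open>\<F>'\<close> in the closure along \<open>f\<close>, the neighbourhood
  \<open>N(f,\<B>)\<close> of \<open>\<F>'\<close> meets \<open>\<F>\<^sup>G\<close>, hence \<open>Age(\<F>') \<subseteq> Age(\<F>)\<close>; the expansion property
  then sends each \<open>\<A> \<in> Age(\<F>)\<close> into an expansion of its witness \<open>B\<close> inside \<open>\<F>'\<close>.
\<close>

lemma
  assumes "is_cat C"
  shows cat_Hom_Ob: "f \<in> Hom C A B \<Longrightarrow> A \<in> Ob C \<and> B \<in> Ob C"
    and cat_idm_Hom: "A \<in> Ob C \<Longrightarrow> idm C A \<in> Hom C A A"
    and cat_comp_Hom: "f \<in> Hom C A B \<Longrightarrow> g \<in> Hom C B D \<Longrightarrow> comp C g f \<in> Hom C A D"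
    and cat_comp_assoc: "f \<in> Hom C A B \<Longrightarrow> g \<in> Hom C B D \<Longrightarrow> h \<in> Hom C D E \<Longrightarrow>
      comp C h (comp C g f) = comp C (comp C h g) f"
    and cat_idm_left: "f \<in> Hom C A B \<Longrightarrow> comp C (idm C B) f = f"
    and cat_idm_right: "f \<in> Hom C A B \<Longrightarrow> comp C f (idm C A) = f"
  using assms unfolding is_cat_def by blast+

lemma arr_trans: "is_cat C \<Longrightarrow> arr C A B \<Longrightarrow> arr C B D \<Longrightarrow> arr C A D"
  unfolding arr_def by (metis cat_comp_Hom ex_in_conv)

lemma
  assumes C: "is_cat C" and g: "g \<in> Aut C F"
  shows aut_inv_Hom: "aut_inv C F g \<in> Hom C F F"
    and aut_inv_comp: "comp C (aut_inv C F g) g = idm C F"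
proof -
  from g obtain h where h: "g \<in> Hom C F F" "h \<in> Hom C F F"
      "comp C h g = idm C F" "comp C g h = idm C F"
    unfolding Aut_def by blast
  have "k = h" if k: "k \<in> Hom C F F" "comp C k g = idm C F" for k
  proof -
    have "k = comp C k (comp C g h)" using cat_idm_right[OF C k(1)] h(4) by simp
    also have "\<dots> = comp C (comp C k g) h" using cat_comp_assoc[OF C h(2) h(1) k(1)] .
    also have "\<dots> = h" using k(2) cat_idm_left[OF C h(2)] by simp
    finally show ?thesis .
  qed
  then have "aut_inv C F g = h"
    unfolding aut_inv_def using h by (intro the_equality) blast+
  then show "aut_inv C F g \<in> Hom C F F" "comp C (aut_inv C F g) g = idm C F"
    using h by simp_all
qed

lemma locally_finite_factor_finite:
  assumes C: "is_cat C" and LF: "locally_finite C Obf F" and A: "A \<in> Obf"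
    and e0: "e0 \<in> Hom C A F" and EE: "finite EE" "EE \<subseteq> Hom C A F"
  shows "\<exists>B\<in>Obf. \<exists>f\<in>Hom C B F. \<forall>e\<in>EE. \<exists>p\<in>Hom C A B. e = comp C f p"
  using EE
proof (induction EE rule: finite_induct)
  case empty
  then show ?case using A e0 by blast
next
  case (insert e EE)
  then obtain B f where B: "B \<in> Obf" "f \<in> Hom C B F"
      and factor: "\<forall>e'\<in>EE. \<exists>p\<in>Hom C A B. e' = comp C f p"
    by auto
  have e: "e \<in> Hom C A F" using insert.prems by blast
  obtain D r p q where D: "D \<in> Obf" "r \<in> Hom C D F" "p \<in> Hom C A D" "q \<in> Hom C B D"
      "comp C r p = e" "comp C r q = f"
    using LF A B e unfolding locally_finite_def by meson
  have "\<exists>p'\<in>Hom C A D. e' = comp C r p'" if "e' \<in> EE" for e'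
  proof -
    obtain p' where p': "p' \<in> Hom C A B" "e' = comp C f p'" using factor \<open>e' \<in> EE\<close> by blast
    then have "e' = comp C r (comp C q p')" using D cat_comp_assoc[OF C p'(1) D(4) D(2)] by simp
    then show ?thesis using cat_comp_Hom[OF C p'(1) D(4)] by blast
  qed
  moreover have "\<exists>p'\<in>Hom C A D. e = comp C r p'" using D(3,5) by metis
  ultimately show ?case using D(1,2) by (metis insert_iff)
qed

lemma compactin_indexed_finite_subcover:
  assumes K: "compactin X K" and N: "\<And>i. i \<in> I \<Longrightarrow> openin X (N i)"
    and cover: "K \<subseteq> (\<Union>i\<in>I. N i)"
  obtains J where "J \<subseteq> I" "finite J" "K \<subseteq> (\<Union>i\<in>J. N i)"
proof -
  have "\<forall>T\<in>N ` I. openin X T" using N by blast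
  then obtain \<N> where "finite \<N>" "\<N> \<subseteq> N ` I" "K \<subseteq> \<Union>\<N>"
    using K cover unfolding compactin_def by blast
  then show ?thesis using that finite_subset_image[of \<N> N I] by blast
qed

lemma topspace_sigma_top: "topspace (sigma_top Cs U C Obf F) = Uinv Cs U F"
  unfolding sigma_top_def topology_generated_by_topspace Nbhd_def by auto

lemma openin_Nbhd:
  "a \<in> Ob_fin_exp Cs U Obf \<Longrightarrow> e \<in> Hom C (U a) F \<Longrightarrow>
    openin (sigma_top Cs U C Obf F) (Nbhd Cs U F e a)"
  unfolding sigma_top_def by (rule topology_generated_by_Basis) blast

locale expansion_with_unique_restrictions =
  fixes C :: "('o,'m) cat" and Cs :: "('x,'m) cat" and U :: "'x \<Rightarrow> 'o"
  assumes cat: "is_cat C"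
    and expansion: "expansion Cs U C"
    and reasonable: "reasonable Cs U C"
    and unique_restrictions: "unique_restrictions Cs U C"
begin

lemma cat_Cs: "is_cat Cs"
  and Hom_Cs_subset: "Hom Cs a b \<subseteq> Hom C (U a) (U b)"
  and comp_Cs: "f \<in> Hom Cs a b \<Longrightarrow> g \<in> Hom Cs b c \<Longrightarrow> comp Cs g f = comp C g f"
  and idm_Cs: "a \<in> Ob Cs \<Longrightarrow> idm Cs a = idm C (U a)"
  using expansion unfolding expansion_def by auto

lemma comp_Cs_Hom: "f \<in> Hom Cs a b \<Longrightarrow> g \<in> Hom Cs b c \<Longrightarrow> comp C g f \<in> Hom Cs a c"
  using cat_comp_Hom[OF cat_Cs] comp_Cs by metis

lemma restriction_exists:
  "b \<in> Ob Cs \<Longrightarrow> e \<in> Hom C A (U b) \<Longrightarrow> \<exists>a\<in>Uinv Cs U A. e \<in> Hom Cs a b"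
  using unique_restrictions unfolding unique_restrictions_def by blast

lemma restriction_unique:
  assumes "a \<in> Uinv Cs U A" "a' \<in> Uinv Cs U A" "e \<in> Hom Cs a b" "e \<in> Hom Cs a' b"
  shows "a = a'"
proof -
  have "b \<in> Ob Cs" using cat_Hom_Ob[OF cat_Cs assms(3)] by blast
  moreover have "e \<in> Hom C A (U b)" using assms(1,3) Hom_Cs_subset unfolding Uinv_def by blast
  ultimately show ?thesis
    using assms unique_restrictions unfolding unique_restrictions_def by blast
qed

lemma extension_exists: "e \<in> Hom C A B \<Longrightarrow> a \<in> Uinv Cs U A \<Longrightarrow> \<exists>b\<in>Uinv Cs U B. e \<in> Hom Cs a b"
  using reasonable unfolding reasonable_def by blast

lemma Hom_Cs_cancel:
  assumes f: "f \<in> Hom Cs b z" and p: "p \<in> Hom C (U a) (U b)" and a: "a \<in> Ob Cs"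
    and fp: "comp C f p \<in> Hom Cs a z"
  shows "p \<in> Hom Cs a b"
proof -
  have "b \<in> Ob Cs" using cat_Hom_Ob[OF cat_Cs f] by blast
  then obtain a' where a': "a' \<in> Uinv Cs U (U a)" "p \<in> Hom Cs a' b"
    using restriction_exists p by blast
  have "a' = a"
    using restriction_unique[OF a'(1) _ comp_Cs_Hom[OF a'(2) f] fp] a unfolding Uinv_def by blast
  then show ?thesis using a' by simp
qed

lemma
  assumes Fs: "Fs \<in> Ob Cs" and g: "g \<in> Aut C (U Fs)"
  shows exp_act_Uinv: "exp_act Cs U C Fs g \<in> Uinv Cs U (U Fs)"
    and aut_inv_Hom_exp_act: "aut_inv C (U Fs) g \<in> Hom Cs Fs (exp_act Cs U C Fs g)"
    and Hom_exp_act: "g \<in> Hom Cs (exp_act Cs U C Fs g) Fs"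
proof -
  let ?F = "U Fs" and ?g' = "aut_inv C (U Fs) g"
  have "g \<in> Hom C ?F ?F" using g unfolding Aut_def by blast
  then obtain a0 where a0: "a0 \<in> Uinv Cs U ?F" "g \<in> Hom Cs a0 Fs"
    using restriction_exists Fs by blast
  have "Fs \<in> Uinv Cs U ?F" using Fs unfolding Uinv_def by simp
  then obtain Y where Y: "Y \<in> Uinv Cs U ?F" "?g' \<in> Hom Cs Fs Y"
    using extension_exists aut_inv_Hom[OF cat g] by blast
  \<comment> \<open>both \<open>Y'\<close> and \<open>a0\<close> are restrictions of \<open>Y'\<close> along the identity\<close>
  have Y_unique: "Y' = a0" if Y': "Y' \<in> Uinv Cs U ?F" "?g' \<in> Hom Cs Fs Y'" for Y'
  proof -
    have "idm Cs Y' = idm C ?F" using Y'(1) idm_Cs unfolding Uinv_def by auto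
    then have "idm C ?F \<in> Hom Cs Y' Y'"
      using cat_idm_Hom[OF cat_Cs] Y'(1) unfolding Uinv_def by (metis mem_Collect_eq)
    moreover have "idm C ?F \<in> Hom Cs a0 Y'"
      using comp_Cs_Hom[OF a0(2) Y'(2)] aut_inv_comp[OF cat g] by simp
    ultimately show ?thesis using restriction_unique Y'(1) a0(1) by blast
  qed
  have "exp_act Cs U C Fs g = Y"
    unfolding exp_act_def using Y Y_unique by (intro the_equality) blast+
  moreover have "Y = a0" using Y_unique Y .
  ultimately show "exp_act Cs U C Fs g \<in> Uinv Cs U ?F" "?g' \<in> Hom Cs Fs (exp_act Cs U C Fs g)"
      "g \<in> Hom Cs (exp_act Cs U C Fs g) Fs"
    using Y a0 by simp_all
qed

lemma orbit_exp_subset_Uinv: "Fs \<in> Ob Cs \<Longrightarrow> orbit_exp Cs U C Fs \<subseteq> Uinv Cs U (U Fs)"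
  unfolding orbit_exp_def using exp_act_Uinv by blast

lemma arr_orbit_exp: "Fs \<in> Ob Cs \<Longrightarrow> Z \<in> orbit_exp Cs U C Fs \<Longrightarrow> arr Cs Z Fs"
  unfolding orbit_exp_def arr_def using Hom_exp_act by blast

lemma homogeneous_Hom_orbit_exp:
  assumes hom: "homogeneous C Obf (U Fs)" and Fs: "Fs \<in> Ob Cs" and b: "U b \<in> Obf"
    and h: "h \<in> Hom Cs b Fs" and f: "f \<in> Hom C (U b) (U Fs)"
  shows "\<exists>Z\<in>orbit_exp Cs U C Fs. f \<in> Hom Cs b Z"
proof -
  let ?F = "U Fs"
  have hC: "h \<in> Hom C (U b) ?F" using h Hom_Cs_subset by blast
  obtain g where g: "g \<in> Aut C ?F" "comp C g f = h"
    using hom b f hC unfolding homogeneous_def by blast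
  have gH: "g \<in> Hom C ?F ?F" using g(1) unfolding Aut_def by blast
  have "comp C (aut_inv C ?F g) h = comp C (comp C (aut_inv C ?F g) g) f"
    using g(2) cat_comp_assoc[OF cat f gH aut_inv_Hom[OF cat g(1)]] by simp
  also have "\<dots> = f" using aut_inv_comp[OF cat g(1)] cat_idm_left[OF cat f] by simp
  finally have "f \<in> Hom Cs b (exp_act Cs U C Fs g)"
    using comp_Cs_Hom[OF h aut_inv_Hom_exp_act[OF Fs g(1)]] by simp
  then show ?thesis using g(1) unfolding orbit_exp_def by blast
qed

lemma Age_exp_arr_closed: "a \<in> Age_exp Cs U Obf X \<Longrightarrow> arr Cs X Y \<Longrightarrow> a \<in> Age_exp Cs U Obf Y"
  unfolding Age_exp_def using arr_trans[OF cat_Cs] by blast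

lemma U_Age_exp: "a \<in> Age_exp Cs U Obf Fs \<Longrightarrow> U a \<in> Age C Obf (U Fs)"
  unfolding Age_exp_def Ob_fin_exp_def Age_def arr_def using Hom_Cs_subset by blast

lemma finite_Uinv_if_compact:
  assumes K: "compact_space (sigma_top Cs U C Obf F)"
    and A: "A \<in> Obf" and e0: "e0 \<in> Hom C A F"
  shows "finite (Uinv Cs U A)"
proof -
  let ?X = "sigma_top Cs U C Obf F" and ?N = "\<lambda>a. Nbhd Cs U F e0 a"
  have opens: "openin ?X (?N a)" if "a \<in> Uinv Cs U A" for a
    using openin_Nbhd that A e0 unfolding Uinv_def Ob_fin_exp_def by fastforce
  have cover: "topspace ?X \<subseteq> (\<Union>a\<in>Uinv Cs U A. ?N a)"
    using restriction_exists e0 unfolding topspace_sigma_top Nbhd_def Uinv_def by fastforce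
  obtain S where S: "S \<subseteq> Uinv Cs U A" "finite S" "topspace ?X \<subseteq> (\<Union>a\<in>S. ?N a)"
    using compactin_indexed_finite_subcover[OF K[unfolded compact_space_def] opens cover] .
  have "a \<in> S" if a: "a \<in> Uinv Cs U A" for a
  proof -
    obtain Y where Y: "Y \<in> Uinv Cs U F" "e0 \<in> Hom Cs a Y" using extension_exists e0 a by blast
    then obtain a1 where "a1 \<in> S" "e0 \<in> Hom Cs a1 Y"
      using S(3) unfolding topspace_sigma_top Nbhd_def by blast
    then show ?thesis using restriction_unique[OF a] Y(2) S(1) by blast
  qed
  then have "Uinv Cs U A \<subseteq> S" by blast
  then show ?thesis using S(2) by (rule finite_subset)
qed

lemma finite_Hom_cover_if_compactin:
  assumes K: "compactin (sigma_top Cs U C Obf F) K"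
    and a: "a \<in> Ob_fin_exp Cs U Obf" and age: "\<forall>Y\<in>K. arr Cs a Y"
  shows "\<exists>EE. finite EE \<and> EE \<subseteq> Hom C (U a) F \<and> (\<forall>Y\<in>K. \<exists>e\<in>EE. e \<in> Hom Cs a Y)"
proof -
  let ?N = "\<lambda>e. Nbhd Cs U F e a"
  have "K \<subseteq> Uinv Cs U F" using K compactin_subset_topspace topspace_sigma_top by metis
  then have cover: "K \<subseteq> (\<Union>e\<in>Hom C (U a) F. ?N e)"
    using age Hom_Cs_subset unfolding arr_def Nbhd_def Uinv_def by fastforce
  obtain EE where EE: "EE \<subseteq> Hom C (U a) F" "finite EE" "K \<subseteq> (\<Union>e\<in>EE. ?N e)"
    by (rule compactin_indexed_finite_subcover[OF K openin_Nbhd[OF a] cover])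
  have "\<forall>Y\<in>K. \<exists>e\<in>EE. e \<in> Hom Cs a Y" using EE(3) unfolding Nbhd_def by auto
  then show ?thesis using EE(1,2) by blast
qed

lemma Age_exp_closure_orbit_subset:
  assumes Fs: "Fs \<in> Uinv Cs U F"
    and Y: "Y \<in> sigma_top Cs U C Obf F closure_of orbit_exp Cs U C Fs"
  shows "Age_exp Cs U Obf Y \<subseteq> Age_exp Cs U Obf Fs"
proof
  fix b assume b: "b \<in> Age_exp Cs U Obf Y"
  then obtain f where f: "f \<in> Hom Cs b Y" and bfin: "b \<in> Ob_fin_exp Cs U Obf"
    unfolding Age_exp_def arr_def by blast
  have YF: "Y \<in> Uinv Cs U F" using Y closure_of_subset_topspace topspace_sigma_top by fast
  then have "f \<in> Hom C (U b) F" using f Hom_Cs_subset unfolding Uinv_def by blast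
  then have "openin (sigma_top Cs U C Obf F) (Nbhd Cs U F f b)" by (rule openin_Nbhd[OF bfin])
  moreover have "Y \<in> Nbhd Cs U F f b" using YF f unfolding Nbhd_def by blast
  ultimately obtain Z where Z: "Z \<in> orbit_exp Cs U C Fs" "Z \<in> Nbhd Cs U F f b"
    using Y unfolding in_closure_of by blast
  have "b \<in> Age_exp Cs U Obf Z" using Z(2) bfin unfolding Nbhd_def Age_exp_def arr_def by blast
  then show "b \<in> Age_exp Cs U Obf Fs"
    using Age_exp_arr_closed arr_orbit_exp Z(1) Fs unfolding Uinv_def by blast
qed

lemma Age_exp_subset_closure_orbit_if_expansion_property:
  assumes EP: "expansion_property Cs U C Obf Fs" and Fs: "Fs \<in> Uinv Cs U F"
    and Y: "Y \<in> sigma_top Cs U C Obf F closure_of orbit_exp Cs U C Fs"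
  shows "Age_exp Cs U Obf Fs \<subseteq> Age_exp Cs U Obf Y"
proof
  fix a assume a: "a \<in> Age_exp Cs U Obf Fs"
  obtain B where B: "B \<in> Age C Obf (U Fs)"
    and arr_B: "\<forall>b\<in>Age_exp Cs U Obf Fs. U b = B \<longrightarrow> arr Cs a b"
    using EP U_Age_exp[OF a] a unfolding expansion_property_def by blast
  obtain f where f: "f \<in> Hom C B F" using B Fs unfolding Age_def arr_def Uinv_def by blast
  have YF: "Y \<in> Uinv Cs U F" using Y closure_of_subset_topspace topspace_sigma_top by fast
  then obtain b where b: "b \<in> Uinv Cs U B" "f \<in> Hom Cs b Y"
    using restriction_exists f unfolding Uinv_def by blast
  then have "b \<in> Age_exp Cs U Obf Y"
    using B unfolding Age_exp_def Ob_fin_exp_def Uinv_def Age_def arr_def by blast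
  then have "b \<in> Age_exp Cs U Obf Fs" using Age_exp_closure_orbit_subset[OF Fs Y] by blast
  then have "a \<in> Age_exp Cs U Obf b"
    using arr_B b(1) a unfolding Uinv_def Age_exp_def by blast
  moreover have "arr Cs b Y" using b(2) unfolding arr_def by blast
  ultimately show "a \<in> Age_exp Cs U Obf Y" by (rule Age_exp_arr_closed)
qed

lemma arr_if_orbit_exp_factors:
  assumes hom: "homogeneous C Obf (U Fs)" and Fs: "Fs \<in> Ob Cs" and a: "a \<in> Ob Cs"
    and b: "b \<in> Age_exp Cs U Obf Fs" and f: "f \<in> Hom C (U b) (U Fs)"
    and factor: "\<forall>Z\<in>orbit_exp Cs U C Fs. \<exists>p\<in>Hom C (U a) (U b). comp C f p \<in> Hom Cs a Z"
  shows "arr Cs a b"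
proof -
  obtain h where h: "h \<in> Hom Cs b Fs" and "U b \<in> Obf"
    using b unfolding Age_exp_def Ob_fin_exp_def arr_def by blast
  then obtain Z where Z: "Z \<in> orbit_exp Cs U C Fs" "f \<in> Hom Cs b Z"
    using homogeneous_Hom_orbit_exp[OF hom Fs _ _ f] by blast
  then obtain p where "p \<in> Hom C (U a) (U b)" "comp C f p \<in> Hom Cs a Z" using factor by blast
  then have "p \<in> Hom Cs a b" using Hom_Cs_cancel[OF Z(2) _ a] by blast
  then show ?thesis unfolding arr_def by blast
qed

lemma closure_orbit_embeddings_factor:
  assumes K: "compact_space (sigma_top Cs U C Obf F)" and LF: "locally_finite C Obf F"
    and Fs: "Fs \<in> Uinv Cs U F"
    and H: "\<forall>Y \<in> sigma_top Cs U C Obf F closure_of orbit_exp Cs U C Fs.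
      Age_exp Cs U Obf Fs \<subseteq> Age_exp Cs U Obf Y"
    and A: "A \<in> Obf" and e0: "e0 \<in> Hom C A F"
  obtains B f where "B \<in> Obf" "f \<in> Hom C B F"
    "\<And>a Y. a \<in> Age_exp Cs U Obf Fs \<Longrightarrow> U a = A \<Longrightarrow>
      Y \<in> sigma_top Cs U C Obf F closure_of orbit_exp Cs U C Fs \<Longrightarrow>
      \<exists>p\<in>Hom C A B. comp C f p \<in> Hom Cs a Y"
proof -
  let ?X = "sigma_top Cs U C Obf F" and ?O = "orbit_exp Cs U C Fs"
  define S where "S = {a \<in> Age_exp Cs U Obf Fs. U a = A}"
  have "S \<subseteq> Uinv Cs U A" unfolding S_def Age_exp_def Ob_fin_exp_def Uinv_def by blast
  then have "finite S" using finite_Uinv_if_compact[OF K A e0] by (rule finite_subset)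
  have "compactin ?X (?X closure_of ?O)"
    using K closedin_compact_space closedin_closure_of by blast
  then have "\<exists>EE. finite EE \<and> EE \<subseteq> Hom C A F \<and> (\<forall>Y\<in>?X closure_of ?O. \<exists>e\<in>EE. e \<in> Hom Cs a Y)"
    if "a \<in> S" for a
    using finite_Hom_cover_if_compactin H that unfolding S_def Age_exp_def by fastforce
  then obtain EE where EE: "\<And>a. a \<in> S \<Longrightarrow> finite (EE a) \<and> EE a \<subseteq> Hom C A F \<and>
      (\<forall>Y\<in>?X closure_of ?O. \<exists>e\<in>EE a. e \<in> Hom Cs a Y)"
    by metis
  have "finite (\<Union>(EE ` S))" "\<Union>(EE ` S) \<subseteq> Hom C A F" using \<open>finite S\<close> EE by auto
  then obtain B f where "B \<in> Obf" "f \<in> Hom C B F"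
    and factor: "\<forall>e\<in>\<Union>(EE ` S). \<exists>p\<in>Hom C A B. e = comp C f p"
    using locally_finite_factor_finite[OF cat LF A e0] by metis
  moreover have "\<exists>p\<in>Hom C A B. comp C f p \<in> Hom Cs a Y"
    if "a \<in> Age_exp Cs U Obf Fs" "U a = A" "Y \<in> ?X closure_of ?O" for a Y
  proof -
    have "a \<in> S" using that unfolding S_def by blast
    then show ?thesis using EE factor that(3) by fastforce
  qed
  ultimately show ?thesis using that by blast
qed

lemma expansion_property_if_Age_exp_subset_closure_orbit:
  assumes K: "compact_space (sigma_top Cs U C Obf F)"
    and LF: "locally_finite C Obf F" and hom: "homogeneous C Obf F" and Fs: "Fs \<in> Uinv Cs U F"
    and H: "\<forall>Y \<in> sigma_top Cs U C Obf F closure_of orbit_exp Cs U C Fs.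
      Age_exp Cs U Obf Fs \<subseteq> Age_exp Cs U Obf Y"
  shows "expansion_property Cs U C Obf Fs"
  unfolding expansion_property_def
proof
  let ?X = "sigma_top Cs U C Obf F" and ?O = "orbit_exp Cs U C Fs"
  have UFs: "U Fs = F" and FsOb: "Fs \<in> Ob Cs" using Fs unfolding Uinv_def by auto
  fix A assume "A \<in> Age C Obf (U Fs)"
  then obtain e0 where A: "A \<in> Obf" and e0: "e0 \<in> Hom C A F"
    unfolding Age_def arr_def UFs by blast
  obtain B f where B: "B \<in> Obf" and f: "f \<in> Hom C B F"
    and factor: "\<And>a Y. a \<in> Age_exp Cs U Obf Fs \<Longrightarrow> U a = A \<Longrightarrow> Y \<in> ?X closure_of ?O \<Longrightarrow>
      \<exists>p\<in>Hom C A B. comp C f p \<in> Hom Cs a Y"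
    using closure_orbit_embeddings_factor[OF K LF Fs H A e0] by blast
  have orbit_closure: "?O \<subseteq> ?X closure_of ?O"
    using closure_of_subset orbit_exp_subset_Uinv[OF FsOb] UFs topspace_sigma_top by metis
  have "arr Cs a b"
    if a: "a \<in> Age_exp Cs U Obf Fs" "U a = A" and b: "b \<in> Age_exp Cs U Obf Fs" "U b = B" for a b
  proof (rule arr_if_orbit_exp_factors[OF hom[folded UFs] FsOb _ b(1)])
    show "a \<in> Ob Cs" using a(1) unfolding Age_exp_def Ob_fin_exp_def by blast
    show "f \<in> Hom C (U b) (U Fs)" using f b(2) UFs by simp
    show "\<forall>Z\<in>?O. \<exists>p\<in>Hom C (U a) (U b). comp C f p \<in> Hom Cs a Z"
      using factor[OF a] orbit_closure a(2) b(2) by blast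
  qed
  moreover have "B \<in> Age C Obf (U Fs)" using B f UFs unfolding Age_def arr_def by blast
  ultimately show "\<exists>B\<in>Age C Obf (U Fs). \<forall>a\<in>Age_exp Cs U Obf Fs. \<forall>b\<in>Age_exp Cs U Obf Fs.
      U a = A \<longrightarrow> U b = B \<longrightarrow> arr Cs a b" by blast
qed

end

theorem proposition5p12:
  fixes C :: "('o,'m) cat" and Obf :: "'o set"
    and Cs :: "('x,'m) cat" and U :: "'x \<Rightarrow> 'o"
    and F :: 'o and Fs :: 'x
  assumes "is_cat C"
    and "fin_conditions C Obf"
    and "expansion Cs U C"
    and "reasonable Cs U C"
    and "unique_restrictions Cs U C"
    and "F \<in> Ob C"
    and "locally_finite C Obf F"
    and "homogeneous C Obf F"
    and "compact_space (sigma_top Cs U C Obf F)"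
    and "Fs \<in> Uinv Cs U F"
  shows "expansion_property Cs U C Obf Fs \<longleftrightarrow>
    (\<forall>Fs' \<in> (sigma_top Cs U C Obf F) closure_of (orbit_exp Cs U C Fs).
        Age_exp Cs U Obf Fs \<subseteq> Age_exp Cs U Obf Fs')"
proof -
  interpret expansion_with_unique_restrictions C Cs U
    using assms(1,3-5) by unfold_locales
  show ?thesis
    using Age_exp_subset_closure_orbit_if_expansion_property[OF _ assms(10)]
      expansion_property_if_Age_exp_subset_closure_orbit[OF assms(9,7,8,10)]
    by blast
qed

end
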